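(* Let $q>1$, let $k$ be a positive integer and $0\le r<k$ an integer. For $s\in\mathbb C$ arbitrary when $|z|<1$, or $\Re(s)>k$ when $|z|=1$ (the variable of integration $a$ ranging over $a\in\mathbb C\setminus\mathbb Z_0^-$), $$\int_0^1\Phi_{k-r}\bigl(z,s,a+(k-r)\bigr)\,d_qa=z^{-(k-r)}\sum_{l=0}^\infty\binom{-s}{l}\frac{\mathrm{Li}_{k-r}(z,s+l)}{[l+1]_q}.$$
   Context: $\mathbb Z_0^-=\{0,-1,-2,\ldots\}$. For $q>1$, the Jackson integral is $\int_0^1 f(a)\,d_qa=(q-1)\sum_{n=1}^\infty f(q^{-n})q^{-n}$, and $[x]_q=\frac{q^{x}-1}{q-1}$. The multiple Hurwitz-Lerch zeta function is $\Phi_j(z,s,a)=\sum_{m_1,\ldots,m_j=0}^\infty\frac{z^{m_1+\dots+m_j}}{(m_1+\dots+m_j+a)^{s}}$, and the multiple Lipschitz-Lerch zeta function is $\mathrm{Li}_j(z,s)=\sum_{m_1,\ldots,m_j=1}^\infty\frac{z^{m_1+\dots+m_j}}{(m_1+\dots+m_j)^{s}}$, both with $s\in\mathbb C$ when $|z|<1$ and $\Re(s)>j$ when $|z|=1$. $\binom{-s}{l}=\frac{(-s)(-s-1)\cdots(-s-l+1)}{l!}$. *)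

theory Defs
  imports "HOL-Analysis.Analysis"
begin

definition jackson_int :: "real \<Rightarrow> (real \<Rightarrow> complex) \<Rightarrow> complex" where
  "jackson_int q f =
     complex_of_real (q - 1) *
     (\<Sum>n. f (q powr (- real (Suc n))) * complex_of_real (q powr (- real (Suc n))))"

definition q_num :: "real \<Rightarrow> real \<Rightarrow> real" where
  "q_num q x = (q powr x - 1) / (q - 1)"

definition mult_HL_zeta :: "nat \<Rightarrow> complex \<Rightarrow> complex \<Rightarrow> complex \<Rightarrow> complex" where
  "mult_HL_zeta j z s a =
     infsum (\<lambda>m. z ^ (sum m {..<j}) / (of_nat (sum m {..<j}) + a) powr s)
            (PiE {..<j} (\<lambda>_. UNIV))"

definition mult_LL_zeta :: "nat \<Rightarrow> complex \<Rightarrow> complex \<Rightarrow> complex" where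
  "mult_LL_zeta j z s =
     infsum (\<lambda>m. z ^ (sum m {..<j}) / (of_nat (sum m {..<j})) powr s)
            (PiE {..<j} (\<lambda>_. {1..}))"

end

theory Submission
  imports Defs "HOL-Real_Asymp.Real_Asymp"
begin

(*
  For 0 < x < 1 and a tuple n of positive integers with |n| = n_1 + ... + n_j, the generalized
  binomial theorem gives (|n| + x)^(-s) = \<Sum>_l binom(-s, l) x^l |n|^(-s-l).  Shifting the indices
  of \<Phi>_j(z, s, x + j) by one turns the Jackson integral into a triple series over the Jackson
  nodes x = q^(-N-1), the tuples n and the binomial index l.  The series converges absolutely:
  it is dominated by a product of a geometric series in N, of \<Sum>_l |binom(-s, l)| q^(-l) and of
  the Lipschitz-Lerch series for Re s, the latter being controlled through
  |n|^(-\<sigma>) \<le> \<Prod>_i n_i^(-\<sigma>/j).  Summing over N first instead, \<Sum>_N x^(l+1) is geometric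
  with value 1/((q-1)[l+1]_q), and what remains over n is Li_j(z, s + l).
*)

lemma summable_power_mult_powr:
  fixes w t :: real
  assumes "0 \<le> w" "w < 1"
  shows "summable (\<lambda>m. w ^ m * real m powr t)"
proof (cases "w = 0")
  case True
  then have "(\<lambda>m. w ^ m * real m powr t) = (\<lambda>_. 0)"
    by (auto simp: fun_eq_iff power_0_left)
  then show ?thesis by simp
next
  case False
  define c where "c = (1 + w) / 2"
  have "0 < w / c" "w / c < 1" "0 < c" "c < 1"
    using assms False by (auto simp: c_def field_simps)
  then have "(\<lambda>m. real m powr t * (w / c) ^ m) \<longlonglongrightarrow> 0"
    by real_asymp
  then have "eventually (\<lambda>m. real m powr t * (w / c) ^ m < 1) sequentially"
    by (rule order_tendstoD(2)) simp
  then have "eventually (\<lambda>m. norm (w ^ m * real m powr t) \<le> c ^ m) sequentially"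
  proof (rule eventually_mono)
    fix m assume "real m powr t * (w / c) ^ m < 1"
    then have "c ^ m * (real m powr t * (w / c) ^ m) \<le> c ^ m"
      using \<open>0 < c\<close> by (simp add: mult_left_le)
    also have "c ^ m * (real m powr t * (w / c) ^ m) = w ^ m * real m powr t"
      using \<open>0 < c\<close> by (simp add: power_divide)
    finally show "norm (w ^ m * real m powr t) \<le> c ^ m"
      using assms by simp
  qed
  then show ?thesis
    using \<open>0 < c\<close> \<open>c < 1\<close> by (intro summable_comparison_test_ev[OF _ summable_geometric]) auto
qed

lemma summable_norm_gchoose_mult_power:
  fixes a :: complex and x :: real
  assumes "0 \<le> x" "x < 1"
  shows "summable (\<lambda>l. norm (a gchoose l) * x ^ l)"
proof -
  define y where "y = (1 + x) / 2"
  have y: "x < y" "y < 1" using assms by (auto simp: y_def)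
  have "summable (\<lambda>l. (a gchoose l) * complex_of_real y ^ l)"
    using gen_binomial_complex[of "complex_of_real y" a] y assms by (auto simp: sums_iff)
  from powser_insidea[OF this, of "complex_of_real x"]
  show ?thesis using y assms by (simp add: norm_mult norm_power)
qed

lemma summable_on_product_nonneg:
  fixes f :: "'a \<Rightarrow> real" and g :: "'b \<Rightarrow> real"
  assumes "f summable_on A" "g summable_on B"
    and "\<And>x. x \<in> A \<Longrightarrow> f x \<ge> 0" "\<And>y. y \<in> B \<Longrightarrow> g y \<ge> 0"
  shows "(\<lambda>(x, y). f x * g y) summable_on A \<times> B"
proof (rule summable_on_SigmaI[where g = "\<lambda>x. f x * infsum g B"])
  show "((\<lambda>y. case (x, y) of (x, y) \<Rightarrow> f x * g y) has_sum f x * infsum g B) B" for x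
    using has_sum_cmult_right[OF has_sum_infsum[OF assms(2)]] by simp
  show "(\<lambda>x. f x * infsum g B) summable_on A"
    using summable_on_cmult_left[OF assms(1)] by simp
qed (use assms in auto)

lemma summable_on_PiE_prod_nonneg:
  fixes g :: "'b \<Rightarrow> real"
  assumes "finite I" "countable A" "g summable_on A" "\<And>x. x \<in> A \<Longrightarrow> g x \<ge> 0"
  shows "(\<lambda>n. \<Prod>i\<in>I. g (n i)) summable_on PiE I (\<lambda>_. A)"
proof -
  have "(\<lambda>x. norm (g x)) summable_on A"
    by (rule summable_on_cong[THEN iffD2, OF _ assms(3)]) (simp add: assms(4))
  then have "Infinite_Set_Sum.abs_summable_on g A"
    by (rule abs_summable_equivalent[THEN iffD1])
  from abs_summable_on_prod_PiE[where f = "\<lambda>_. g" and B = "\<lambda>_. A", OF assms(1,2) this]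
  have "Infinite_Set_Sum.abs_summable_on (\<lambda>n. \<Prod>i\<in>I. g (n i)) (PiE I (\<lambda>_. A))" .
  then have "(\<lambda>n. norm (\<Prod>i\<in>I. g (n i))) summable_on PiE I (\<lambda>_. A)"
    by (rule abs_summable_equivalent[THEN iffD2])
  then show ?thesis
    by (rule abs_summable_summable)
qed

lemma sum_powr_le_card_powr_mult_prod_powr:
  fixes n :: "'a \<Rightarrow> nat" and t :: real
  assumes "finite I" "t \<ge> 0" "\<And>i. i \<in> I \<Longrightarrow> n i \<ge> 1"
  shows "real (sum n I) powr t \<le> real (card I) powr t * (\<Prod>i\<in>I. real (n i) powr t)"
proof -
  have "prod n I > 0"
    using assms(3) by (intro prod_pos) (simp add: Suc_le_eq)
  then have "n i \<le> prod n I" if "i \<in> I" for i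
    using assms(1) that by (intro dvd_imp_le dvd_prodI) auto
  then have "sum n I \<le> card I * prod n I"
    using sum_bounded_above[of I n "prod n I"] by simp
  then have "real (sum n I) \<le> real (card I * prod n I)"
    by (simp only: of_nat_le_iff)
  then have "real (sum n I) powr t \<le> real (card I * prod n I) powr t"
    by (rule powr_mono2[OF assms(2) of_nat_0_le_iff])
  also have "\<dots> = real (card I) powr t * (\<Prod>i\<in>I. real (n i) powr t)"
    by (simp only: of_nat_mult of_nat_prod powr_mult prod_powr_distrib)
  finally show ?thesis .
qed

lemma sum_powr_card_mult_le_prod_powr:
  fixes n :: "'a \<Rightarrow> nat" and t :: real
  assumes "finite I" "t \<le> 0" "\<And>i. i \<in> I \<Longrightarrow> n i \<ge> 1"
  shows "real (sum n I) powr (real (card I) * t) \<le> (\<Prod>i\<in>I. real (n i) powr t)"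
proof (cases "I = {}")
  case False
  then obtain i0 where "i0 \<in> I" by blast
  then have "n i0 \<le> sum n I"
    using assms(1) by (intro member_le_sum) auto
  with assms(3)[OF \<open>i0 \<in> I\<close>] have "sum n I > 0"
    by linarith
  then have pos: "real (sum n I) > 0"
    by (simp only: of_nat_0_less_iff)
  have "real (sum n I) powr (real (card I) * t) = (\<Prod>i\<in>I. real (sum n I) powr t)"
    using pos by (simp add: powr_powr[symmetric] powr_realpow mult.commute)
  also have "\<dots> \<le> (\<Prod>i\<in>I. real (n i) powr t)"
    using assms by (intro prod_mono conjI powr_mono2') (auto simp: Suc_le_eq intro: member_le_sum)
  finally show ?thesis .
qed simp

lemma sum_PiE_ge_1:
  fixes j :: nat
  assumes "0 < j" "n \<in> PiE {..<j} (\<lambda>_. {1::nat..})"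
  shows "sum n {..<j} \<ge> 1"
proof -
  have "n 0 \<le> sum n {..<j}"
    using assms(1) by (intro member_le_sum) auto
  moreover have "n 0 \<ge> 1"
    using assms by auto
  ultimately show ?thesis by linarith
qed

lemma summable_on_norm_mult_LL_zeta:
  fixes z :: complex and \<sigma> :: real
  assumes "0 < j" and "norm z < 1 \<or> (norm z = 1 \<and> \<sigma> > real j)"
  shows "(\<lambda>n. norm z ^ sum n {..<j} * real (sum n {..<j}) powr (- \<sigma>))
           summable_on PiE {..<j} (\<lambda>_. {1::nat..})"
proof -
  note of_nat_sum[simp del]
  (* \<sigma> \<ge> 0: |n|^(-\<sigma>) \<le> \<Prod>_i n_i^(-\<sigma>/j);  \<sigma> < 0, which forces |z| < 1: |n| \<le> j \<Prod>_i n_i *)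
  obtain t C where summable_t: "summable (\<lambda>m. norm z ^ m * real m powr t)"
    and bound: "\<And>n. n \<in> PiE {..<j} (\<lambda>_. {1..}) \<Longrightarrow>
                  real (sum n {..<j}) powr (- \<sigma>) \<le> C * (\<Prod>i<j. real (n i) powr t)"
  proof (cases "\<sigma> \<ge> 0")
    case True
    show ?thesis
    proof (rule that[where C = 1 and t = "- \<sigma> / j"])
      show "summable (\<lambda>m. norm z ^ m * real m powr (- \<sigma> / j))"
      proof (cases "norm z < 1")
        case False
        with assms(2) have "norm z = 1" "- \<sigma> / j < -1"
          using assms(1) by (auto simp: field_simps)
        then show ?thesis by (simp add: summable_real_powr_iff)
      qed (simp add: summable_power_mult_powr)
    next
      fix n :: "nat \<Rightarrow> nat" assume "n \<in> PiE {..<j} (\<lambda>_. {1..})"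
      then have "real (sum n {..<j}) powr (real (card {..<j}) * (- \<sigma> / j)) \<le> (\<Prod>i<j. real (n i) powr (- \<sigma> / j))"
        using True by (intro sum_powr_card_mult_le_prod_powr) auto
      then show "real (sum n {..<j}) powr (- \<sigma>) \<le> 1 * (\<Prod>i<j. real (n i) powr (- \<sigma> / j))"
        using assms(1) by simp
    qed
  next
    case False
    with assms(2) have "norm z < 1" by auto
    show ?thesis
    proof (rule that[where C = "real j powr (- \<sigma>)" and t = "- \<sigma>"])
      show "summable (\<lambda>m. norm z ^ m * real m powr (- \<sigma>))"
        using \<open>norm z < 1\<close> by (simp add: summable_power_mult_powr)
    next
      fix n :: "nat \<Rightarrow> nat" assume "n \<in> PiE {..<j} (\<lambda>_. {1..})"
      then have "real (sum n {..<j}) powr (- \<sigma>) \<le> real (card {..<j}) powr (- \<sigma>) * (\<Prod>i<j. real (n i) powr (- \<sigma>))"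
        using False by (intro sum_powr_le_card_powr_mult_prod_powr) auto
      then show "real (sum n {..<j}) powr (- \<sigma>) \<le> real j powr (- \<sigma>) * (\<Prod>i<j. real (n i) powr (- \<sigma>))"
        by simp
    qed
  qed
  define g where "g m = norm z ^ m * real m powr t" for m
  have "summable g"
    unfolding g_def[abs_def] by (rule summable_t)
  then have "g summable_on UNIV"
    by (subst summable_on_UNIV_nonneg_real_iff) (auto simp: g_def)
  then have "g summable_on {1..}"
    by (rule summable_on_subset_banach) simp
  then have "(\<lambda>n. \<Prod>i<j. g (n i)) summable_on PiE {..<j} (\<lambda>_. {1..})"
    by (rule summable_on_PiE_prod_nonneg[rotated 2]) (auto simp: g_def)
  then have "(\<lambda>n. C * (\<Prod>i<j. g (n i))) summable_on PiE {..<j} (\<lambda>_. {1..})"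
    by (rule summable_on_cmult_right)
  then show ?thesis
  proof (rule summable_on_comparison_test)
    fix n assume n: "n \<in> PiE {..<j} (\<lambda>_. {1::nat..})"
    have "norm z ^ sum n {..<j} * real (sum n {..<j}) powr (- \<sigma>)
            \<le> (\<Prod>i<j. norm z ^ n i) * (C * (\<Prod>i<j. real (n i) powr t))"
      unfolding power_sum[symmetric] by (intro mult_left_mono bound[OF n]) simp
    also have "\<dots> = C * (\<Prod>i<j. g (n i))"
      by (simp add: g_def prod.distrib)
    finally show "norm z ^ sum n {..<j} * real (sum n {..<j}) powr (- \<sigma>) \<le> C * (\<Prod>i<j. g (n i))" .
  qed simp
qed

(* x z^m times the l-th term of the binomial expansion of (m + x)^(-s) *)
definition lerch_binomial_term :: "complex \<Rightarrow> complex \<Rightarrow> real \<Rightarrow> nat \<Rightarrow> nat \<Rightarrow> complex"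
  where "lerch_binomial_term z s x m l =
           ((- s) gchoose l) * z ^ m * of_real x ^ Suc l * of_nat m powr (- s - of_nat l)"

lemma norm_lerch_binomial_term_le:
  assumes "0 \<le> x" "x \<le> \<rho>" "m \<ge> 1"
  shows "norm (lerch_binomial_term z s x m l)
           \<le> x * (norm z ^ m * real m powr (- Re s)) * (norm ((- s) gchoose l) * \<rho> ^ l)"
proof -
  have "norm (lerch_binomial_term z s x m l)
          = norm ((- s) gchoose l) * norm z ^ m * (x ^ Suc l * real m powr (- Re s - real l))"
    using assms(1) norm_powr_real_powr[of "of_nat m" "- s - of_nat l"]
    by (simp add: lerch_binomial_term_def norm_mult norm_power)
  also have "\<dots> \<le> norm ((- s) gchoose l) * norm z ^ m * ((x * \<rho> ^ l) * real m powr (- Re s))"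
  proof (intro mult_left_mono mult_mono)
    show "x ^ Suc l \<le> x * \<rho> ^ l"
      using assms(1,2) by (simp add: mult_left_mono power_mono)
    show "real m powr (- Re s - real l) \<le> real m powr (- Re s)"
      using assms(3) by (intro powr_mono) auto
  qed (use assms(1,2) in auto)
  also have "\<dots> = x * (norm z ^ m * real m powr (- Re s)) * (norm ((- s) gchoose l) * \<rho> ^ l)"
    by (simp only: mult_ac)
  finally show ?thesis .
qed

lemma summable_on_lerch_binomial_term:
  fixes q :: real and z s :: complex
  assumes "q > 1" "0 < j" "norm z < 1 \<or> (norm z = 1 \<and> Re s > real j)"
  shows "(\<lambda>(N, n, l). lerch_binomial_term z s ((1 / q) ^ Suc N) (sum n {..<j}) l)
           summable_on UNIV \<times> (PiE {..<j} (\<lambda>_. {1::nat..}) \<times> UNIV)"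
proof -
  note of_nat_sum[simp del]
  define T where "T = PiE {..<j} (\<lambda>_. {1::nat..})"
  define u where "u N = (1 / q) ^ Suc N" for N
  define v where "v n = norm z ^ sum n {..<j} * real (sum n {..<j}) powr (- Re s)" for n :: "nat \<Rightarrow> nat"
  define w where "w l = norm ((- s) gchoose l) * (1 / q) ^ l" for l
  have "summable u"
    using assms(1) unfolding u_def by (subst summable_Suc_iff) (simp add: summable_geometric)
  then have "u summable_on UNIV"
    using assms(1) by (subst summable_on_UNIV_nonneg_real_iff) (auto simp: u_def)
  have "v summable_on T"
    unfolding v_def T_def by (rule summable_on_norm_mult_LL_zeta[OF assms(2,3)])
  have "summable w"
    unfolding w_def using assms(1) by (intro summable_norm_gchoose_mult_power) auto
  then have "w summable_on UNIV"
    using assms(1) by (subst summable_on_UNIV_nonneg_real_iff) (auto simp: w_def)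
  with \<open>v summable_on T\<close> have "(\<lambda>(n, l). v n * w l) summable_on T \<times> UNIV"
    by (rule summable_on_product_nonneg) (use assms(1) in \<open>auto simp: v_def w_def\<close>)
  with \<open>u summable_on UNIV\<close> have "(\<lambda>(N, p). u N * (case p of (n, l) \<Rightarrow> v n * w l)) summable_on UNIV \<times> (T \<times> UNIV)"
    by (rule summable_on_product_nonneg) (use assms(1) in \<open>auto simp: u_def v_def w_def\<close>)
  then have dominant: "(\<lambda>(N, n, l). u N * (v n * w l)) summable_on UNIV \<times> (T \<times> UNIV)"
    by (simp add: case_prod_unfold)
  have bound: "norm (lerch_binomial_term z s (u N) (sum n {..<j}) l) \<le> u N * (v n * w l)"
    if "n \<in> T" for N n l
  proof -
    have "0 \<le> u N" and "u N \<le> 1 / q"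
      using assms(1) power_decreasing[of 1 "Suc N" "1 / q"] by (simp_all add: u_def)
    moreover have "sum n {..<j} \<ge> 1"
      using sum_PiE_ge_1[OF assms(2)] that by (simp add: T_def)
    ultimately show ?thesis
      using norm_lerch_binomial_term_le[of "u N" "1 / q" "sum n {..<j}" z s l]
      unfolding v_def w_def mult.assoc by blast
  qed
  have "(\<lambda>p. norm ((\<lambda>(N, n, l). lerch_binomial_term z s (u N) (sum n {..<j}) l) p))
          summable_on UNIV \<times> (T \<times> UNIV)"
  proof (rule summable_on_comparison_test[OF dominant])
    fix p :: "nat \<times> (nat \<Rightarrow> nat) \<times> nat"
    assume "p \<in> UNIV \<times> (T \<times> UNIV)"
    then obtain N n l where p: "p = (N, n, l)" and "n \<in> T"
      by auto
    show "norm ((\<lambda>(N, n, l). lerch_binomial_term z s (u N) (sum n {..<j}) l) p)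
            \<le> (\<lambda>(N, n, l). u N * (v n * w l)) p"
      unfolding p prod.case by (rule bound[OF \<open>n \<in> T\<close>])
  qed simp
  then show ?thesis
    unfolding T_def u_def by (rule abs_summable_summable)
qed

lemma sums_iterated_infsum:
  fixes f :: "nat \<Rightarrow> 'a \<Rightarrow> 'b \<Rightarrow> 'c::{banach, uniform_topological_group_add}"
  assumes "(\<lambda>(N, n, l). f N n l) summable_on UNIV \<times> (A \<times> B)"
  shows "(\<lambda>N. \<Sum>\<^sub>\<infinity>n\<in>A. \<Sum>\<^sub>\<infinity>l\<in>B. f N n l) sums (\<Sum>\<^sub>\<infinity>(N, n, l)\<in>UNIV \<times> (A \<times> B). f N n l)"
proof -
  have inner: "(\<Sum>\<^sub>\<infinity>n\<in>A. \<Sum>\<^sub>\<infinity>l\<in>B. f N n l) = (\<Sum>\<^sub>\<infinity>(n, l)\<in>A \<times> B. f N n l)" for N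
    using summable_on_SigmaD1[of "\<lambda>N (n, l). f N n l" UNIV "\<lambda>_. A \<times> B" N] assms
    by (intro infsum_Sigma'_banach) simp
  have "((\<lambda>N. \<Sum>\<^sub>\<infinity>(n, l)\<in>A \<times> B. f N n l) has_sum (\<Sum>\<^sub>\<infinity>(N, n, l)\<in>UNIV \<times> (A \<times> B). f N n l)) UNIV"
    using summable_on_Sigma_banach[of "\<lambda>N (n, l). f N n l" UNIV "\<lambda>_. A \<times> B"]
      infsum_Sigma'_banach[of "\<lambda>N (n, l). f N n l" UNIV "\<lambda>_. A \<times> B"] assms
    by (metis has_sum_infsum)
  then show ?thesis
    unfolding inner by (rule has_sum_imp_sums)
qed

lemma sums_iterated_infsum_swap:
  fixes f :: "nat \<Rightarrow> 'a \<Rightarrow> nat \<Rightarrow> 'c::{banach, uniform_topological_group_add}"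
  assumes "(\<lambda>(N, n, l). f N n l) summable_on UNIV \<times> (A \<times> UNIV)"
  shows "(\<lambda>l. \<Sum>\<^sub>\<infinity>n\<in>A. \<Sum>\<^sub>\<infinity>N. f N n l) sums (\<Sum>\<^sub>\<infinity>(N, n, l)\<in>UNIV \<times> (A \<times> UNIV). f N n l)"
proof -
  let ?D = "UNIV \<times> (A \<times> UNIV) :: (nat \<times> 'a \<times> nat) set"
  have swap: "bij_betw (\<lambda>(l, n, N). (N, n, l)) ?D ?D"
    by (rule bij_betwI[where g = "\<lambda>(N, n, l). (l, n, N)"]) auto
  have comp: "(\<lambda>p. (\<lambda>(N, n, l). f N n l) ((\<lambda>(l, n, N). (N, n, l)) p)) = (\<lambda>(l, n, N). f N n l)"
    by (rule ext) (simp split: prod.split)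
  have summable: "(\<lambda>(l, n, N). f N n l) summable_on ?D"
    using summable_on_reindex_bij_betw[OF swap, of "\<lambda>(N, n, l). f N n l"] assms
    unfolding comp by blast
  have "(\<Sum>\<^sub>\<infinity>(l, n, N)\<in>?D. f N n l) = (\<Sum>\<^sub>\<infinity>(N, n, l)\<in>?D. f N n l)"
    using infsum_reindex_bij_betw[OF swap, of "\<lambda>(N, n, l). f N n l"] unfolding comp .
  with sums_iterated_infsum[of "\<lambda>l n N. f N n l" A UNIV, OF summable] show ?thesis
    by (simp only:)
qed

lemma bij_betw_Suc_PiE:
  "bij_betw (\<lambda>m. restrict (\<lambda>i. Suc (m i)) I) (PiE I (\<lambda>_. UNIV)) (PiE I (\<lambda>_. {1::nat..}))"
proof (rule bij_betwI[where g = "\<lambda>n. restrict (\<lambda>i. n i - 1) I"])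
  show "restrict (\<lambda>i. restrict (\<lambda>i. Suc (m i)) I i - 1) I = m" if "m \<in> PiE I (\<lambda>_. UNIV)" for m
    using that by (auto simp: fun_eq_iff PiE_def extensional_def)
  show "restrict (\<lambda>i. Suc (restrict (\<lambda>i. n i - 1) I i)) I = n" if "n \<in> PiE I (\<lambda>_. {1..})" for n
    using that by (fastforce simp: fun_eq_iff PiE_def extensional_def Pi_def)
qed auto

lemma mult_HL_zeta_shift:
  assumes "z \<noteq> 0"
  shows "mult_HL_zeta j z s (a + of_nat j)
           = z powi (- int j) * (\<Sum>\<^sub>\<infinity>n\<in>PiE {..<j} (\<lambda>_. {1..}).
                                   z ^ sum n {..<j} * (of_nat (sum n {..<j}) + a) powr (- s))"
proof -
  let ?h = "\<lambda>n. z ^ sum n {..<j} * (of_nat (sum n {..<j}) + a) powr (- s)"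
  have shift: "z ^ sum m {..<j} / (of_nat (sum m {..<j}) + (a + of_nat j)) powr s
                 = z powi (- int j) * ?h (restrict (\<lambda>i. Suc (m i)) {..<j})" for m
  proof -
    have sum_shift: "sum (restrict (\<lambda>i. Suc (m i)) {..<j}) {..<j} = sum m {..<j} + j"
      by (simp add: sum_Suc)
    have base: "of_nat (sum m {..<j}) + (a + of_nat j) = of_nat (sum m {..<j} + j) + a"
      by simp
    have power: "z ^ sum m {..<j} = z powi (- int j) * z ^ (sum m {..<j} + j)"
      using assms by (simp add: power_add power_int_minus)
    show ?thesis
      unfolding sum_shift base power powr_minus divide_inverse by (simp only: mult.assoc)
  qed
  have "mult_HL_zeta j z s (a + of_nat j)
          = (\<Sum>\<^sub>\<infinity>m\<in>PiE {..<j} (\<lambda>_. UNIV). z powi (- int j) * ?h (restrict (\<lambda>i. Suc (m i)) {..<j}))"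
    unfolding mult_HL_zeta_def by (intro infsum_cong shift)
  also have "\<dots> = z powi (- int j) * (\<Sum>\<^sub>\<infinity>n\<in>PiE {..<j} (\<lambda>_. {1..}). ?h n)"
    by (subst infsum_cmult_right') (rule arg_cong[OF infsum_reindex_bij_betw[OF bij_betw_Suc_PiE]])
  finally show ?thesis .
qed

(* (q - 1) times this sum is the Jackson integral of a^l *)
lemma jackson_power_sums:
  assumes "q > 1"
  shows "(\<lambda>N. ((1 / q) ^ Suc N) ^ Suc l) sums (1 / ((q - 1) * q_num q (real l + 1)))"
proof -
  define \<rho> where "\<rho> = (1 / q) ^ Suc l"
  have "0 < 1 / q" "1 / q < 1"
    using assms by auto
  then have "0 < \<rho>" and "\<rho> < 1"
    unfolding \<rho>_def by (simp, rule power_Suc_less_one)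
  then have "(\<lambda>N. \<rho> * \<rho> ^ N) sums (\<rho> * (1 / (1 - \<rho>)))"
    by (intro sums_mult geometric_sums) simp
  moreover have "((1 / q) ^ Suc N) ^ Suc l = \<rho> * \<rho> ^ N" for N
  proof -
    have "((1 / q) ^ Suc N) ^ Suc l = \<rho> ^ Suc N"
      unfolding \<rho>_def power_mult[symmetric] by (simp only: mult.commute)
    then show ?thesis by simp
  qed
  moreover have "\<rho> * (1 / (1 - \<rho>)) = 1 / ((q - 1) * q_num q (real l + 1))"
  proof -
    have "q powr (real l + 1) = q ^ Suc l"
      using assms by (simp add: powr_add powr_realpow[symmetric] add.commute)
    then have num: "(q - 1) * q_num q (real l + 1) = q ^ Suc l - 1"
      using assms by (simp add: q_num_def)
    have "q ^ Suc l > 1"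
      using assms by (intro one_less_power) auto
    then show ?thesis
      unfolding num \<rho>_def power_one_over using assms by (simp add: field_simps)
  qed
  ultimately show ?thesis by simp
qed

lemma has_sum_lerch_binomial_term_over_l:
  assumes "0 \<le> x" "x < 1" "m \<ge> 1"
  shows "((\<lambda>l. lerch_binomial_term z s x m l) has_sum
           of_real x * z ^ m * (of_nat m + of_real x) powr (- s)) UNIV"
proof (rule norm_summable_imp_has_sum)
  have "summable (\<lambda>l. x * (norm z ^ m * real m powr (- Re s)) * (norm ((- s) gchoose l) * x ^ l))"
    using assms by (intro summable_mult summable_norm_gchoose_mult_power)
  then show "summable (\<lambda>l. norm (lerch_binomial_term z s x m l))"
    by (rule summable_comparison_test'[where N = 0])
      (simp add: norm_lerch_binomial_term_le[OF assms(1) order.refl assms(3)])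
  have "\<bar>x\<bar> < \<bar>real m\<bar>"
    using assms by simp
  from sums_mult[OF gen_binomial_complex'[OF this, of "- s"], of "of_real x * z ^ m"]
  show "(\<lambda>l. lerch_binomial_term z s x m l) sums (of_real x * z ^ m * (of_nat m + of_real x) powr (- s))"
    by (simp add: lerch_binomial_term_def add.commute mult_ac)
qed

lemma has_sum_lerch_binomial_term_over_N:
  assumes "q > 1"
  shows "((\<lambda>N. lerch_binomial_term z s ((1 / q) ^ Suc N) m l) has_sum
           ((- s) gchoose l) * z ^ m * of_nat m powr (- s - of_nat l)
             / of_real ((q - 1) * q_num q (real l + 1))) UNIV"
proof -
  have "((\<lambda>N. ((1 / q) ^ Suc N) ^ Suc l) has_sum (1 / ((q - 1) * q_num q (real l + 1)))) UNIV"
    using assms by (intro sums_nonneg_imp_has_sum jackson_power_sums) auto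
  from has_sum_cmult_right[OF has_sum_bounded_linear[OF bounded_linear_of_real this],
      of "((- s) gchoose l) * z ^ m * of_nat m powr (- s - of_nat l)"]
  show ?thesis
    by (simp add: lerch_binomial_term_def divide_inverse mult_ac)
qed

lemma mult_HL_zeta_shift_expansion:
  assumes "0 < j" "z \<noteq> 0" "0 \<le> x" "x < 1"
  shows "mult_HL_zeta j z s (of_real x + of_nat j) * of_real x
           = z powi (- int j) * (\<Sum>\<^sub>\<infinity>n\<in>PiE {..<j} (\<lambda>_. {1..}).
                                   \<Sum>\<^sub>\<infinity>l. lerch_binomial_term z s x (sum n {..<j}) l)"
proof -
  let ?h = "\<lambda>n. z ^ sum n {..<j} * (of_nat (sum n {..<j}) + of_real x) powr (- s)"
  have "(\<Sum>\<^sub>\<infinity>l. lerch_binomial_term z s x (sum n {..<j}) l) = of_real x * ?h n"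
    if "n \<in> PiE {..<j} (\<lambda>_. {1..})" for n
    using infsumI[OF has_sum_lerch_binomial_term_over_l[OF assms(3,4) sum_PiE_ge_1[OF assms(1) that]]]
    by (simp only: mult.assoc)
  then have "(\<Sum>\<^sub>\<infinity>n\<in>PiE {..<j} (\<lambda>_. {1..}). \<Sum>\<^sub>\<infinity>l. lerch_binomial_term z s x (sum n {..<j}) l)
               = of_real x * (\<Sum>\<^sub>\<infinity>n\<in>PiE {..<j} (\<lambda>_. {1..}). ?h n)"
    unfolding infsum_cmult_right'[symmetric] by (rule infsum_cong)
  then show ?thesis
    unfolding mult_HL_zeta_shift[OF assms(2), of j s "of_real x"] by (simp only: ac_simps)
qed

lemma mult_LL_zeta_jackson_expansion:
  assumes "q > 1"
  shows "((- s) gchoose l) * mult_LL_zeta j z (s + of_nat l) / of_real (q_num q (real l + 1))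
           = of_real (q - 1) * (\<Sum>\<^sub>\<infinity>n\<in>PiE {..<j} (\<lambda>_. {1..}).
                                 \<Sum>\<^sub>\<infinity>N. lerch_binomial_term z s ((1 / q) ^ Suc N) (sum n {..<j}) l)"
proof -
  let ?c = "((- s) gchoose l) / of_real ((q - 1) * q_num q (real l + 1))"
  let ?h = "\<lambda>n. z ^ sum n {..<j} * of_nat (sum n {..<j}) powr (- s - of_nat l)"
  have "(\<Sum>\<^sub>\<infinity>N. lerch_binomial_term z s ((1 / q) ^ Suc N) (sum n {..<j}) l) = ?c * ?h n" for n
    using infsumI[OF has_sum_lerch_binomial_term_over_N[OF assms, of z s "sum n {..<j}" l]]
    by (simp only: times_divide_eq_left divide_inverse ac_simps)
  then have sum_over_N: "(\<Sum>\<^sub>\<infinity>n\<in>PiE {..<j} (\<lambda>_. {1..}).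
                            \<Sum>\<^sub>\<infinity>N. lerch_binomial_term z s ((1 / q) ^ Suc N) (sum n {..<j}) l)
                          = ?c * (\<Sum>\<^sub>\<infinity>n\<in>PiE {..<j} (\<lambda>_. {1..}). ?h n)"
    unfolding infsum_cmult_right'[symmetric] by (rule infsum_cong)
  have mult_LL_zeta_eq: "mult_LL_zeta j z (s + of_nat l) = (\<Sum>\<^sub>\<infinity>n\<in>PiE {..<j} (\<lambda>_. {1..}). ?h n)"
    unfolding mult_LL_zeta_def by (intro infsum_cong) (simp add: powr_minus[symmetric] divide_inverse)
  have cancel: "g * X / Q = c * (g / (c * Q) * X)" if "c \<noteq> 0" for g X Q c :: complex
    using that by (cases "Q = 0") (simp_all add: field_simps)
  show ?thesis
    unfolding sum_over_N mult_LL_zeta_eq of_real_mult by (rule cancel) (use assms in simp)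
qed

theorem lemma3p1:
  fixes q :: real and k r :: nat and z s :: complex
  assumes "q > 1" and "0 < k" and "r < k" and "z \<noteq> 0"
    and "norm z < 1 \<or> (norm z = 1 \<and> Re s > real k)"
  shows "jackson_int q (\<lambda>a. mult_HL_zeta (k - r) z s (complex_of_real a + of_nat (k - r)))
       = z powi (- int (k - r)) *
         (\<Sum>l. ((- s) gchoose l) * mult_LL_zeta (k - r) z (s + of_nat l)
                / complex_of_real (q_num q (real l + 1)))"
proof -
  define j where "j = k - r"
  have "0 < j"
    using assms(3) by (simp add: j_def)
  have convergence: "norm z < 1 \<or> (norm z = 1 \<and> Re s > real j)"
    using assms(5) by (auto simp: j_def)
  let ?f = "\<lambda>N n l. lerch_binomial_term z s ((1 / q) ^ Suc N) (sum n {..<j}) l"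
  define total where "total = (\<Sum>\<^sub>\<infinity>(N, n, l)\<in>UNIV \<times> (PiE {..<j} (\<lambda>_. {1..}) \<times> UNIV). ?f N n l)"
  have summable: "(\<lambda>(N, n, l). ?f N n l) summable_on UNIV \<times> (PiE {..<j} (\<lambda>_. {1..}) \<times> UNIV)"
    by (rule summable_on_lerch_binomial_term[OF assms(1) \<open>0 < j\<close> convergence])
  have node: "q powr (- real (Suc N)) = (1 / q) ^ Suc N" for N
    using assms(1) by (simp add: powr_minus powr_realpow power_one_over field_simps del: of_nat_Suc)
  have "0 \<le> (1 / q) ^ Suc N" and "(1 / q) ^ Suc N < 1" for N
    using assms(1) by (simp, intro power_Suc_less_one) auto
  note expand = mult_HL_zeta_shift_expansion[OF \<open>0 < j\<close> assms(4) this]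
  have "(\<lambda>N. mult_HL_zeta j z s (of_real (q powr (- real (Suc N))) + of_nat j)
                   * of_real (q powr (- real (Suc N)))) sums (z powi (- int j) * total)"
    unfolding node expand total_def by (rule sums_mult[OF sums_iterated_infsum[OF summable]])
  moreover have "(\<lambda>l. ((- s) gchoose l) * mult_LL_zeta j z (s + of_nat l) / of_real (q_num q (real l + 1)))
                   sums (of_real (q - 1) * total)"
    unfolding mult_LL_zeta_jackson_expansion[OF assms(1)] total_def
    by (rule sums_mult[OF sums_iterated_infsum_swap[OF summable]])
  ultimately show ?thesis
    unfolding jackson_int_def j_def[symmetric] by (simp add: sums_unique[symmetric] mult_ac)
qed

end
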